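(* Let $E$ be a real vector space, $M$ a linear subspace of $E$, $S$ a sublinear functional on $E$ and $P$ a superlinear functional on $E$. Let $x_0\in E\setminus M$ and let $M_1$ be the smallest linear subspace of $E$ containing $M$ and $x_0$. Let $f_0$ be a linear functional on $M$ such that $f_0(x)\le S(x+y)-P(y)$ for every $x\in M$ and every $y\in M_1$. Then there exists a linear functional $L$ on $M_1$ such that $L(x)=f_0(x)$ for all $x\in M$ and $P(x)\le L(x)\le S(x)$ for every $x\in M_1$.
   Context: A functional $S:E\to\mathbb{R}$ is sublinear if $S(x+y)\le S(x)+S(y)$ for all $x,y\in E$ and $S(\alpha x)=\alpha S(x)$ for all $x\in E$, $\alpha>0$. A functional $P:E\to\mathbb{R}$ is superlinear if $P(x+y)\ge P(x)+P(y)$ and $P(\alpha x)=\alpha P(x)$ for all $x,y\in E$, $\alpha>0$. *)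

theory Defs
  imports "HOL-Analysis.Analysis"
begin

definition sublinear :: "('a::real_vector \<Rightarrow> real) \<Rightarrow> bool" where
  "sublinear S \<longleftrightarrow> (\<forall>x y. S (x + y) \<le> S x + S y) \<and> (\<forall>x (\<alpha>::real). \<alpha> > 0 \<longrightarrow> S (\<alpha> *\<^sub>R x) = \<alpha> * S x)"

definition superlinear :: "('a::real_vector \<Rightarrow> real) \<Rightarrow> bool" where
  "superlinear P \<longleftrightarrow> (\<forall>x y. P (x + y) \<ge> P x + P y) \<and> (\<forall>x (\<alpha>::real). \<alpha> > 0 \<longrightarrow> P (\<alpha> *\<^sub>R x) = \<alpha> * P x)"

definition linear_functional_on :: "'a::real_vector set \<Rightarrow> ('a \<Rightarrow> real) \<Rightarrow> bool" where
  "linear_functional_on U f \<longleftrightarrow>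
     (\<forall>x\<in>U. \<forall>y\<in>U. f (x + y) = f x + f y) \<and> (\<forall>x\<in>U. \<forall>c::real. f (c *\<^sub>R x) = c * f x)"

end

theory Submission
  imports Defs
begin

text \<open>Every vector of span (insert x0 M) is uniquely x + t x0 with x in M, so a linear
  extension is fixed by the single value c = L x0. The constraints P \<le> L \<le> S on the vectors
  u + x0 and u - x0 (u in M) give lower and upper bounds for c; the hypothesis, combined with
  sub- and superadditivity, shows that every lower bound is below every upper bound, so a
  supremum gives an admissible c. Positive homogeneity then propagates the bounds from these
  vectors to all of the span.\<close>

lemma sublinear_add: "sublinear S \<Longrightarrow> S (x + y) \<le> S x + S y"
  unfolding sublinear_def by blast

lemma sublinear_scaleR: "sublinear S \<Longrightarrow> t > 0 \<Longrightarrow> S (t *\<^sub>R x) = t * S x"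
  unfolding sublinear_def by blast

lemma sublinear_zero: "sublinear S \<Longrightarrow> S 0 = 0"
  using sublinear_scaleR[of S 2 0] by simp

lemma superlinear_add: "superlinear P \<Longrightarrow> P x + P y \<le> P (x + y)"
  unfolding superlinear_def by blast

lemma superlinear_scaleR: "superlinear P \<Longrightarrow> t > 0 \<Longrightarrow> P (t *\<^sub>R x) = t * P x"
  unfolding superlinear_def by blast

lemma superlinear_zero: "superlinear P \<Longrightarrow> P 0 = 0"
  using superlinear_scaleR[of P 2 0] by simp

lemma linear_functional_on_add:
  "linear_functional_on U f \<Longrightarrow> x \<in> U \<Longrightarrow> y \<in> U \<Longrightarrow> f (x + y) = f x + f y"
  unfolding linear_functional_on_def by blast

lemma linear_functional_on_scaleR:
  "linear_functional_on U f \<Longrightarrow> x \<in> U \<Longrightarrow> f (c *\<^sub>R x) = c * f x"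
  unfolding linear_functional_on_def by blast

lemma linear_functional_on_diff:
  assumes "linear_functional_on U f" "subspace U" "x \<in> U" "y \<in> U"
  shows "f (x - y) = f x - f y"
proof -
  have "f (x - y) = f (x + (-1) *\<^sub>R y)" by simp
  also have "\<dots> = f x + (-1) * f y"
    using assms by (metis linear_functional_on_add linear_functional_on_scaleR subspace_scale)
  finally show ?thesis by simp
qed

lemma span_insert_subspace_iff:
  assumes "subspace M"
  shows "z \<in> span (insert a M) \<longleftrightarrow> (\<exists>t. z - t *\<^sub>R a \<in> M)"
proof -
  have "span M = M" using assms by (simp add: span_eq_iff)
  then show ?thesis unfolding span_insert by blast
qed

lemma span_insert_coefficient_unique:
  assumes "subspace M" "a \<notin> M" "z - s *\<^sub>R a \<in> M" "z - t *\<^sub>R a \<in> M"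
  shows "s = t"
proof (rule ccontr)
  assume "s \<noteq> t"
  have "(1 / (s - t)) *\<^sub>R ((z - t *\<^sub>R a) - (z - s *\<^sub>R a)) \<in> M"
    using assms by (metis subspace_diff subspace_scale)
  also have "(z - t *\<^sub>R a) - (z - s *\<^sub>R a) = (s - t) *\<^sub>R a"
    by (simp add: algebra_simps)
  also have "(1 / (s - t)) *\<^sub>R ((s - t) *\<^sub>R a) = a"
    using \<open>s \<noteq> t\<close> by simp
  finally show False using assms(2) by blast
qed

lemma linear_functional_on_extend_span_insert:
  assumes M: "subspace M" and a: "a \<notin> M" and f: "linear_functional_on M f"
  shows "\<exists>L. linear_functional_on (span (insert a M)) L \<and>
             (\<forall>x\<in>M. \<forall>t. L (x + t *\<^sub>R a) = f x + t * c)"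
proof -
  define T where "T z = (THE t. z - t *\<^sub>R a \<in> M)" for z
  have T_eq: "T z = t" if "z - t *\<^sub>R a \<in> M" for z t
    unfolding T_def using that span_insert_coefficient_unique[OF M a] by blast
  have T_mem: "z - T z *\<^sub>R a \<in> M" if "z \<in> span (insert a M)" for z
    using that T_eq span_insert_subspace_iff[OF M] by metis
  define L where "L z = f (z - T z *\<^sub>R a) + T z * c" for z
  have "linear_functional_on (span (insert a M)) L"
    unfolding linear_functional_on_def
  proof (intro conjI ballI allI)
    fix x y assume x: "x \<in> span (insert a M)" and y: "y \<in> span (insert a M)"
    have decomp: "(x + y) - (T x + T y) *\<^sub>R a = (x - T x *\<^sub>R a) + (y - T y *\<^sub>R a)"
      by (simp add: algebra_simps)
    then have "T (x + y) = T x + T y"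
      using T_eq T_mem x y M subspace_add by metis
    then show "L (x + y) = L x + L y"
      unfolding L_def using decomp linear_functional_on_add[OF f] T_mem x y
      by (metis (no_types, lifting) distrib_right add.assoc add.left_commute)
  next
    fix x and r :: real assume x: "x \<in> span (insert a M)"
    have decomp: "r *\<^sub>R x - (r * T x) *\<^sub>R a = r *\<^sub>R (x - T x *\<^sub>R a)"
      by (simp add: algebra_simps)
    then have "T (r *\<^sub>R x) = r * T x"
      using T_eq T_mem x M subspace_scale by metis
    then show "L (r *\<^sub>R x) = r * L x"
      unfolding L_def using decomp linear_functional_on_scaleR[OF f] T_mem x
      by (metis (no_types, lifting) distrib_left mult.assoc)
  qed
  moreover have "L (x + t *\<^sub>R a) = f x + t * c" if "x \<in> M" for x t
    using T_eq[of "x + t *\<^sub>R a" t] that unfolding L_def by simp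
  ultimately show ?thesis by blast
qed

lemma real_separation:
  fixes A B :: "real set"
  assumes "A \<noteq> {}" "B \<noteq> {}" "\<forall>a\<in>A. \<forall>b\<in>B. a \<le> b"
  shows "\<exists>c. (\<forall>a\<in>A. a \<le> c) \<and> (\<forall>b\<in>B. c \<le> b)"
proof -
  have "bdd_above A" using assms(2,3) by (meson bdd_aboveI equals0I)
  then show ?thesis using assms by (meson cSup_least cSup_upper)
qed

lemma sandwich_on_ray:
  assumes "sublinear S" "superlinear P" "subspace M" "linear_functional_on M f"
    and e: "\<forall>u\<in>M. P (u + e) \<le> f u + d \<and> f u + d \<le> S (u + e)"
    and "x \<in> M" "t > 0"
  shows "P (x + t *\<^sub>R e) \<le> f x + t * d \<and> f x + t * d \<le> S (x + t *\<^sub>R e)"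
proof -
  define u where "u = (1 / t) *\<^sub>R x"
  have "u \<in> M" unfolding u_def using assms subspace_scale by blast
  have x: "x = t *\<^sub>R u" unfolding u_def using \<open>t > 0\<close> by simp
  have "x + t *\<^sub>R e = t *\<^sub>R (u + e)" unfolding x by (simp add: scaleR_right_distrib)
  moreover have "f x + t * d = t * (f u + d)"
    unfolding x using linear_functional_on_scaleR[OF assms(4) \<open>u \<in> M\<close>]
    by (simp add: algebra_simps)
  ultimately show ?thesis
    using e \<open>u \<in> M\<close> \<open>t > 0\<close> sublinear_scaleR[OF assms(1)] superlinear_scaleR[OF assms(2)]
    by simp
qed

lemma sandwich_on_span_insert:
  assumes sub: "sublinear S" and sup: "superlinear P" and M: "subspace M"
    and f: "linear_functional_on M f"
    and on_M: "\<forall>x\<in>M. P x \<le> f x \<and> f x \<le> S x"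
    and plus: "\<forall>u\<in>M. P (u + a) \<le> f u + c \<and> f u + c \<le> S (u + a)"
    and minus: "\<forall>u\<in>M. P (u - a) \<le> f u - c \<and> f u - c \<le> S (u - a)"
    and "x \<in> M"
  shows "P (x + t *\<^sub>R a) \<le> f x + t * c \<and> f x + t * c \<le> S (x + t *\<^sub>R a)"
proof -
  consider "t > 0" | "t = 0" | "t < 0" by linarith
  then show ?thesis
  proof cases
    case 1
    then show ?thesis using sandwich_on_ray[OF sub sup M f plus \<open>x \<in> M\<close>] by blast
  next
    case 2
    then show ?thesis using on_M \<open>x \<in> M\<close> by simp
  next
    case 3
    have "\<forall>u\<in>M. P (u + - a) \<le> f u + - c \<and> f u + - c \<le> S (u + - a)"
      using minus by simp
    from sandwich_on_ray[OF sub sup M f this \<open>x \<in> M\<close>, of "- t"] 3 show ?thesis by simp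
  qed
qed

lemma exists_sandwich_constant:
  assumes sub: "sublinear S" and sup: "superlinear P" and M: "subspace M"
    and f: "linear_functional_on M f"
    and hyp: "\<forall>x\<in>M. \<forall>y\<in>span (insert a M). f x \<le> S (x + y) - P y"
    and on_M: "\<forall>x\<in>M. P x \<le> f x \<and> f x \<le> S x"
  shows "\<exists>c. (\<forall>u\<in>M. P (u + a) \<le> f u + c \<and> f u + c \<le> S (u + a)) \<and>
             (\<forall>u\<in>M. P (u - a) \<le> f u - c \<and> f u - c \<le> S (u - a))"
proof -
  define A where "A = (\<lambda>u. f u - S (u - a)) ` M \<union> (\<lambda>u. P (u + a) - f u) ` M"
  define B where "B = (\<lambda>v. S (v + a) - f v) ` M \<union> (\<lambda>v. f v - P (v - a)) ` M"
  have "p \<le> q" if pA: "p \<in> A" and qB: "q \<in> B" for p q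
  proof -
    obtain u v where u: "u \<in> M" and v: "v \<in> M"
      and p: "p = f u - S (u - a) \<or> p = P (u + a) - f u"
      and q: "q = S (v + a) - f v \<or> q = f v - P (v - a)"
      using pA qB unfolding A_def B_def by blast
    have span: "v - a \<in> span (insert a M)" "u + a \<in> span (insert a M)"
      using u v by (simp_all add: span_add span_diff span_base)
    have uv: "u + v \<in> M" "u - v \<in> M" "v - u \<in> M"
      using u v M by (simp_all add: subspace_add subspace_diff)
    have "f (u + v) \<le> S ((u - a) + (v + a))" using on_M uv by simp
    also have "\<dots> \<le> S (u - a) + S (v + a)" using sub by (rule sublinear_add)
    finally have 1: "f (u + v) \<le> S (u - a) + S (v + a)" .
    have 2: "f (u - v) \<le> S (u - a) - P (v - a)"
      using hyp[rule_format, of "u - v" "v - a"] uv span by simp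
    have 3: "f (v - u) \<le> S (v + a) - P (u + a)"
      using hyp[rule_format, of "v - u" "u + a"] uv span by simp
    have "P (u + a) + P (v - a) \<le> P ((u + a) + (v - a))" using sup by (rule superlinear_add)
    also have "\<dots> \<le> f (u + v)" using on_M uv by simp
    finally have 4: "P (u + a) + P (v - a) \<le> f (u + v)" .
    have "f (u + v) = f u + f v" "f (u - v) = f u - f v" "f (v - u) = f v - f u"
      using u v M linear_functional_on_add[OF f] linear_functional_on_diff[OF f] by auto
    with 1 2 3 4 show "p \<le> q"
      using p q by (elim disjE) linarith+
  qed
  moreover have "A \<noteq> {}" "B \<noteq> {}"
    unfolding A_def B_def using M subspace_0 by blast+
  ultimately obtain c where lower: "\<forall>p\<in>A. p \<le> c" and upper: "\<forall>q\<in>B. c \<le> q"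
    using real_separation by meson
  have "P (u + a) \<le> f u + c \<and> f u + c \<le> S (u + a) \<and> P (u - a) \<le> f u - c \<and> f u - c \<le> S (u - a)"
    if "u \<in> M" for u
  proof -
    have "f u - S (u - a) \<le> c" "P (u + a) - f u \<le> c"
      using lower that unfolding A_def by blast+
    moreover have "c \<le> S (u + a) - f u" "c \<le> f u - P (u - a)"
      using upper that unfolding B_def by blast+
    ultimately show ?thesis by linarith
  qed
  then show ?thesis by (intro exI[of _ c]) blast
qed

lemma sandwich_on_subspace:
  assumes sub: "sublinear S" and sup: "superlinear P" and M: "subspace M"
    and f: "linear_functional_on M f"
    and hyp: "\<forall>x\<in>M. \<forall>y\<in>span (insert a M). f x \<le> S (x + y) - P y"
    and x: "x \<in> M"
  shows "P x \<le> f x \<and> f x \<le> S x"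
proof -
  have "f x \<le> S (x + 0) - P 0"
    using hyp x span_zero by blast
  moreover have "f (- x) \<le> S (- x + x) - P x"
    using hyp[rule_format, of "- x" x] x M by (simp add: subspace_neg span_base)
  moreover have "f (- x) = - f x"
    using linear_functional_on_scaleR[OF f x, of "-1"] by simp
  ultimately show ?thesis
    using sublinear_zero[OF sub] superlinear_zero[OF sup] by simp
qed

theorem lemma4p5:
  fixes M :: "'a::real_vector set" and S P f0 :: "'a \<Rightarrow> real" and x0 :: 'a
  assumes "subspace M"
    and "sublinear S" and "superlinear P"
    and "x0 \<notin> M"
    and "linear_functional_on M f0"
    and "\<forall>x\<in>M. \<forall>y\<in>span (insert x0 M). f0 x \<le> S (x + y) - P y"
  shows "\<exists>L. linear_functional_on (span (insert x0 M)) L \<and> (\<forall>x\<in>M. L x = f0 x) \<and>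
             (\<forall>x\<in>span (insert x0 M). P x \<le> L x \<and> L x \<le> S x)"
proof -
  have on_M: "\<forall>x\<in>M. P x \<le> f0 x \<and> f0 x \<le> S x"
    using sandwich_on_subspace[OF assms(2,3,1,5,6)] by blast
  obtain c where plus: "\<forall>u\<in>M. P (u + x0) \<le> f0 u + c \<and> f0 u + c \<le> S (u + x0)"
    and minus: "\<forall>u\<in>M. P (u - x0) \<le> f0 u - c \<and> f0 u - c \<le> S (u - x0)"
    using exists_sandwich_constant[OF assms(2,3,1,5,6) on_M] by blast
  obtain L where L: "linear_functional_on (span (insert x0 M)) L"
    and L_eq: "\<forall>x\<in>M. \<forall>t. L (x + t *\<^sub>R x0) = f0 x + t * c"
    using linear_functional_on_extend_span_insert[OF assms(1,4,5)] by blast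
  have "P z \<le> L z \<and> L z \<le> S z" if z: "z \<in> span (insert x0 M)" for z
  proof -
    obtain t where x: "z - t *\<^sub>R x0 \<in> M"
      using z span_insert_subspace_iff[OF assms(1)] by blast
    have "L z = f0 (z - t *\<^sub>R x0) + t * c"
      using L_eq[rule_format, OF x, of t] by simp
    moreover have "P z \<le> f0 (z - t *\<^sub>R x0) + t * c \<and> f0 (z - t *\<^sub>R x0) + t * c \<le> S z"
      using sandwich_on_span_insert[OF assms(2,3,1,5) on_M plus minus x, of t] by simp
    ultimately show ?thesis by simp
  qed
  moreover have "L x = f0 x" if "x \<in> M" for x
    using L_eq[rule_format, OF that, of 0] by simp
  ultimately show ?thesis using L by blast
qed

end
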